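(* Work in $\ell_1$ with sequences indexed by $\{0,1,2,\dots\}$ and standard basis $(e_k)$. Let $\xi$ be a random variable with $\Pr\{\xi=k\}=2^{-k}$ for $k=1,2,\dots$, and let $A\colon\Omega\to\mathcal{L}(\ell_1)$ be $Ax:=x_\xi e_0$ (the operator $|0\rangle\langle\xi|$). Let $\xi_1,\xi_2,\dots$ be i.i.d. copies of $\xi$ and $A_ix:=x_{\xi_i}e_0$. Then for every $x\in\ell_1$, $T>0$, $\varepsilon>0$, $$\lim_{n\to\infty}\Pr\Big\{\sup_{t\in[0,T]}\big\|\big(e^{A_1t/n}\cdots e^{A_nt/n}-e^{t\,\mathbb{E}A}\big)x\big\|_{\ell_1}>\varepsilon\Big\}=0,$$ where $\mathbb{E}A x=\big(\sum_{k\ge1}2^{-k}x_k\big)e_0$.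
   Context: $(\Omega,\mathcal{F},\Pr)$ is a probability space; $e^{Bt}=\sum_k t^kB^k/k!$ for bounded $B$. *)

theory Defs
  imports "HOL-Probability.Probability"
begin

definition l1 :: "(nat \<Rightarrow> real) set" where
  "l1 = {x. summable (\<lambda>k. \<bar>x k\<bar>)}"

definition l1norm :: "(nat \<Rightarrow> real) \<Rightarrow> real" where
  "l1norm x = (\<Sum>k. \<bar>x k\<bar>)"

definition basis_vec :: "nat \<Rightarrow> nat \<Rightarrow> real" where
  "basis_vec k = (\<lambda>j. if j = k then 1 else 0)"

definition opA :: "nat \<Rightarrow> (nat \<Rightarrow> real) \<Rightarrow> (nat \<Rightarrow> real)" where
  "opA m x = (\<lambda>j. x m * basis_vec 0 j)"

definition opEA :: "(nat \<Rightarrow> real) \<Rightarrow> (nat \<Rightarrow> real)" where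
  "opEA x = (\<lambda>j. (\<Sum>k. (1/2) ^ Suc k * x (Suc k)) * basis_vec 0 j)"

text \<open>Operator exponential e^{Bt} x = sum_k t^k B^k x / k!  (for bounded B the series
  converges in l1, hence coordinatewise, so it is computed coordinatewise).\<close>
definition op_exp :: "((nat \<Rightarrow> real) \<Rightarrow> (nat \<Rightarrow> real)) \<Rightarrow> real \<Rightarrow> (nat \<Rightarrow> real) \<Rightarrow> (nat \<Rightarrow> real)" where
  "op_exp B t x = (\<lambda>j. \<Sum>k. (t ^ k / fact k) * ((B ^^ k) x) j)"

text \<open>Product e^{A_1 s} ... e^{A_n s} applied to x (rightmost factor acts first),
  where A_i = opA (xi i omega).\<close>
definition prod_exp :: "(nat \<Rightarrow> nat) \<Rightarrow> nat \<Rightarrow> real \<Rightarrow> (nat \<Rightarrow> real) \<Rightarrow> (nat \<Rightarrow> real)" where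
  "prod_exp idx n s x = foldr (\<lambda>i y. op_exp (opA (idx i)) s y) [1..<Suc n] x"

end

theory Submission
  imports Defs
begin

(* Almost surely every \<xi>_i is nonzero, so all the operators A_i and EA square to zero and
  annihilate the range span{e_0} of one another.  Hence the exponentials are I + tA, the product
  telescopes to x + (t/n)(\<Sum>_i x_{\<xi>_i}) e_0, and its distance to e^{tEA}x is
  t |(1/n)\<Sum>_i x_{\<xi>_i} - \<Sum>_k 2^{-k} x_k|, uniformly controlled on [0,T] by T times the deviation
  of a sample mean of bounded i.i.d. variables from its mean.  Hoeffding's inequality makes the
  probability of a deviation above \<epsilon>/T decay exponentially in n. *)

lemma op_exp_eq_of_square_zero:
  assumes "\<And>y. B (B y) = (\<lambda>_. 0)"
  shows "op_exp B s y = (\<lambda>j. y j + s * B y j)"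
proof -
  have "(B ^^ Suc (Suc m)) y = (\<lambda>_. 0)" for m
    using assms by simp
  then have "(B ^^ k) y = (\<lambda>_. 0)" if "k \<notin> {0, 1}" for k
    using that by (metis One_nat_def insertCI not0_implies_Suc)
  then have "(\<Sum>k. s ^ k / fact k * (B ^^ k) y j) = (\<Sum>k\<in>{0, 1}. s ^ k / fact k * (B ^^ k) y j)"
    for j by (intro suminf_finite) simp_all
  then show ?thesis
    unfolding op_exp_def by simp
qed

lemma op_exp_opA:
  assumes "m \<noteq> 0"
  shows "op_exp (opA m) s y = (\<lambda>j. y j + s * y m * basis_vec 0 j)"
  using assms by (subst op_exp_eq_of_square_zero) (auto simp: opA_def basis_vec_def)

lemma op_exp_opEA:
  "op_exp opEA t y = (\<lambda>j. y j + t * (\<Sum>k. (1/2) ^ Suc k * y (Suc k)) * basis_vec 0 j)"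
  by (subst op_exp_eq_of_square_zero) (auto simp: opEA_def basis_vec_def)

lemma foldr_op_exp_opA:
  assumes "\<And>i. i \<in> set is \<Longrightarrow> idx i \<noteq> 0"
  shows "foldr (\<lambda>i y. op_exp (opA (idx i)) s y) is x
           = (\<lambda>j. x j + s * (\<Sum>i\<leftarrow>is. x (idx i)) * basis_vec 0 j)"
  using assms
proof (induction "is")
  case (Cons a "is")
  \<comment> \<open>the factor for \<open>a\<close> reads coordinate \<open>idx a \<noteq> 0\<close>, untouched by the e_0-corrections before it\<close>
  have "foldr (\<lambda>i y. op_exp (opA (idx i)) s y) is x
      = (\<lambda>j. x j + s * (\<Sum>i\<leftarrow>is. x (idx i)) * basis_vec 0 j)"
    using Cons by simp
  moreover have "idx a \<noteq> 0"
    using Cons.prems by simp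
  ultimately show ?case
    by (simp add: op_exp_opA basis_vec_def algebra_simps)
qed simp

lemma prod_exp_eq:
  assumes "\<And>i. i \<in> {1..n} \<Longrightarrow> idx i \<noteq> 0"
  shows "prod_exp idx n s x = (\<lambda>j. x j + s * (\<Sum>i\<in>{1..n}. x (idx i)) * basis_vec 0 j)"
proof -
  have "(\<Sum>i\<leftarrow>[1..<Suc n]. x (idx i)) = (\<Sum>i\<in>{1..n}. x (idx i))"
    by (simp only: sum_set_upt_conv_sum_list_nat[symmetric] set_upt atLeastLessThanSuc_atLeastAtMost)
  then show ?thesis
    using assms unfolding prod_exp_def by (subst foldr_op_exp_opA) auto
qed

lemma l1norm_scaled_basis_vec: "l1norm (\<lambda>j. a * basis_vec k j) = \<bar>a\<bar>"
proof -
  have "(\<Sum>j. \<bar>a * basis_vec k j\<bar>) = (\<Sum>j\<in>{k}. \<bar>a * basis_vec k j\<bar>)"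
    by (rule suminf_finite) (auto simp: basis_vec_def)
  then show ?thesis
    by (simp add: l1norm_def basis_vec_def)
qed

lemma l1norm_prod_exp_diff_op_exp_opEA:
  assumes "\<And>i. i \<in> {1..n} \<Longrightarrow> idx i \<noteq> 0"
  shows "l1norm (\<lambda>j. prod_exp idx n (t / real n) x j - op_exp opEA t x j)
       = \<bar>t\<bar> * \<bar>(\<Sum>i\<in>{1..n}. x (idx i)) / real n - (\<Sum>k. (1/2) ^ Suc k * x (Suc k))\<bar>"
proof -
  have "prod_exp idx n (t / real n) x = (\<lambda>j. x j + t / real n * (\<Sum>i\<in>{1..n}. x (idx i)) * basis_vec 0 j)"
    using assms by (rule prod_exp_eq)
  then have "(\<lambda>j. prod_exp idx n (t / real n) x j - op_exp opEA t x j)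
      = (\<lambda>j. (t * ((\<Sum>i\<in>{1..n}. x (idx i)) / real n - (\<Sum>k. (1/2) ^ Suc k * x (Suc k))))
               * basis_vec 0 j)"
    by (simp add: op_exp_opEA algebra_simps diff_divide_distrib)
  then show ?thesis
    by (simp add: l1norm_scaled_basis_vec abs_mult)
qed

lemma deviation_ge_of_l1norm_prod_exp_diff_gt:
  assumes "\<And>i. i \<in> {1..n} \<Longrightarrow> idx i \<noteq> 0" and "T > 0"
    and "\<exists>t\<in>{0..T}. \<epsilon> < l1norm (\<lambda>j. prod_exp idx n (t / real n) x j - op_exp opEA t x j)"
  shows "\<epsilon> / T \<le> \<bar>(\<Sum>i\<in>{1..n}. x (idx i)) / real n - (\<Sum>k. (1/2) ^ Suc k * x (Suc k))\<bar>"
proof -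
  let ?d = "\<bar>(\<Sum>i\<in>{1..n}. x (idx i)) / real n - (\<Sum>k. (1/2) ^ Suc k * x (Suc k))\<bar>"
  obtain t where "t \<in> {0..T}"
    and "\<epsilon> < l1norm (\<lambda>j. prod_exp idx n (t / real n) x j - op_exp opEA t x j)"
    using assms(3) by blast
  moreover have "l1norm (\<lambda>j. prod_exp idx n (t / real n) x j - op_exp opEA t x j) = \<bar>t\<bar> * ?d"
    using assms(1) by (rule l1norm_prod_exp_diff_op_exp_opEA)
  ultimately have "\<epsilon> < t * ?d"
    by simp
  also have "\<dots> \<le> T * ?d"
    using \<open>t \<in> {0..T}\<close> by (intro mult_right_mono) auto
  finally show ?thesis
    using \<open>T > 0\<close> by (simp add: pos_divide_le_eq mult.commute)
qed

lemma abs_le_l1norm: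
  assumes "x \<in> l1"
  shows "\<bar>x k\<bar> \<le> l1norm x"
  using assms sum_le_suminf[of "\<lambda>k. \<bar>x k\<bar>" "{k}"] by (simp add: l1_def l1norm_def)

(* A need not be measurable (then measure M A = 0), which spares us proving that the event
  involving a supremum over t is measurable. *)
lemma (in finite_measure) finite_measure_mono_AE:
  assumes "AE \<omega> in M. \<omega> \<in> A \<longrightarrow> \<omega> \<in> B" and "B \<in> sets M"
  shows "measure M A \<le> measure M B"
  using emeasure_mono_AE[OF assms] by (auto simp: measure_def less_top[symmetric] intro!: enn2real_mono)

lemma (in prob_space) sums_prob_eq_nat:
  assumes [measurable]: "X \<in> measurable M (count_space UNIV)"
  shows "(\<lambda>k::nat. prob {\<omega>\<in>space M. X \<omega> = k}) sums 1"
proof -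
  have "(\<lambda>k. prob {\<omega>\<in>space M. X \<omega> = k}) sums prob (\<Union>k. {\<omega>\<in>space M. X \<omega> = k})"
    by (intro measure_UNION) (auto simp: disjoint_family_on_def)
  moreover have "(\<Union>k. {\<omega>\<in>space M. X \<omega> = k}) = space M"
    by auto
  ultimately show ?thesis
    by (simp add: prob_space)
qed

lemma (in prob_space) distr_eq_density_prob_nat:
  assumes [measurable]: "X \<in> measurable M (count_space UNIV)"
  shows "distr M (count_space UNIV) X
       = density (count_space UNIV) (\<lambda>k::nat. prob {\<omega>\<in>space M. X \<omega> = k})"
proof (rule measure_eqI_countable)
  fix k :: nat
  have "emeasure (distr M (count_space UNIV) X) {k} = prob {\<omega>\<in>space M. X \<omega> = k}"
    by (simp add: emeasure_distr emeasure_eq_measure vimage_def Int_def conj_commute)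
  then show "emeasure (distr M (count_space UNIV) X) {k}
      = emeasure (density (count_space UNIV) (\<lambda>k. prob {\<omega>\<in>space M. X \<omega> = k})) {k}"
    by (simp add: emeasure_density)
qed auto

lemma (in prob_space) summable_norm_prob_mult_nat:
  fixes f :: "nat \<Rightarrow> real"
  assumes X: "X \<in> measurable M (count_space UNIV)"
    and bounded: "\<And>k. \<bar>f k\<bar> \<le> K"
  shows "summable (\<lambda>k. norm (prob {\<omega>\<in>space M. X \<omega> = k} * f k))"
proof (rule summable_comparison_test')
  show "summable (\<lambda>k. K * prob {\<omega>\<in>space M. X \<omega> = k})"
    using sums_prob_eq_nat[OF X] by (intro summable_mult) (rule sums_summable)
  show "norm (norm (prob {\<omega>\<in>space M. X \<omega> = k} * f k)) \<le> K * prob {\<omega>\<in>space M. X \<omega> = k}" for k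
    using mult_right_mono[OF bounded[of k] measure_nonneg] by (simp add: abs_mult mult.commute)
qed

lemma (in prob_space) expectation_comp_nat:
  fixes f :: "nat \<Rightarrow> real"
  assumes X[measurable]: "X \<in> measurable M (count_space UNIV)"
    and bounded: "\<And>k. \<bar>f k\<bar> \<le> K"
  shows "expectation (\<lambda>\<omega>. f (X \<omega>)) = (\<Sum>k. prob {\<omega>\<in>space M. X \<omega> = k} * f k)"
proof -
  let ?p = "\<lambda>k. prob {\<omega>\<in>space M. X \<omega> = k}"
  have "expectation (\<lambda>\<omega>. f (X \<omega>)) = integral\<^sup>L (distr M (count_space UNIV) X) f"
    by (rule integral_distr[symmetric]) simp_all
  also have "\<dots> = (\<integral>k. ?p k * f k \<partial>count_space UNIV)"
    unfolding distr_eq_density_prob_nat[OF X] by (subst integral_density) simp_all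
  also have "\<dots> = (\<Sum>k. ?p k * f k)"
    using summable_norm_prob_mult_nat[OF X bounded]
    by (intro integral_count_space_nat) (simp add: integrable_count_space_nat_iff)
  finally show ?thesis .
qed

lemma (in prob_space) prob_eq_0_of_geometric:
  assumes X: "X \<in> measurable M (count_space UNIV)"
    and distr_X: "\<And>k. k \<ge> 1 \<Longrightarrow> prob {\<omega>\<in>space M. X \<omega> = k} = (1/2) ^ k"
  shows "prob {\<omega>\<in>space M. X \<omega> = 0} = 0"
proof -
  have "(\<lambda>k. prob {\<omega>\<in>space M. X \<omega> = Suc k}) sums 1"
    using power_half_series distr_X by simp
  then have "(\<lambda>k. prob {\<omega>\<in>space M. X \<omega> = k}) sums (1 + prob {\<omega>\<in>space M. X \<omega> = 0})"
    using sums_Suc_iff[of "\<lambda>k. prob {\<omega>\<in>space M. X \<omega> = k}"] by simp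
  with sums_prob_eq_nat[OF X] show ?thesis
    using sums_unique2 by fastforce
qed

lemma (in prob_space) AE_neq_0_of_geometric:
  assumes "X \<in> measurable M (count_space UNIV)"
    and "\<And>k. k \<ge> 1 \<Longrightarrow> prob {\<omega>\<in>space M. X \<omega> = k} = (1/2) ^ k"
  shows "AE \<omega> in M. X \<omega> \<noteq> 0"
  using prob_eq_0_of_geometric[OF assms] assms(1)
  by (intro AE_I[where N = "{\<omega>\<in>space M. X \<omega> = 0}"]) (auto simp: emeasure_eq_measure)

lemma (in prob_space) expectation_comp_geometric:
  fixes f :: "nat \<Rightarrow> real"
  assumes X: "X \<in> measurable M (count_space UNIV)"
    and distr_X: "\<And>k. k \<ge> 1 \<Longrightarrow> prob {\<omega>\<in>space M. X \<omega> = k} = (1/2) ^ k"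
    and bounded: "\<And>k. \<bar>f k\<bar> \<le> K"
  shows "expectation (\<lambda>\<omega>. f (X \<omega>)) = (\<Sum>k. (1/2) ^ Suc k * f (Suc k))"
proof -
  have "summable (\<lambda>k. prob {\<omega>\<in>space M. X \<omega> = k} * f k)"
    using summable_norm_prob_mult_nat[OF X bounded] by (rule summable_norm_cancel)
  note split_head = suminf_split_head[OF this]
  have "expectation (\<lambda>\<omega>. f (X \<omega>)) = (\<Sum>k. prob {\<omega>\<in>space M. X \<omega> = k} * f k)"
    by (rule expectation_comp_nat[OF X bounded])
  also have "\<dots> = (\<Sum>k. prob {\<omega>\<in>space M. X \<omega> = Suc k} * f (Suc k))"
    using split_head prob_eq_0_of_geometric[OF X distr_X] by simp
  also have "\<dots> = (\<Sum>k. (1/2) ^ Suc k * f (Suc k))"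
    using distr_X by simp
  finally show ?thesis .
qed

lemma (in prob_space) tendsto_prob_sample_mean_deviation:
  fixes Y :: "nat \<Rightarrow> 'a \<Rightarrow> real"
  assumes indep: "indep_vars (\<lambda>_. borel) Y {1..}"
    and bounded: "\<And>i \<omega>. i \<ge> 1 \<Longrightarrow> \<omega> \<in> space M \<Longrightarrow> \<bar>Y i \<omega>\<bar> \<le> K" and "K > 0"
    and mean: "\<And>i. i \<ge> 1 \<Longrightarrow> expectation (Y i) = c"
    and "\<delta> > 0"
  shows "(\<lambda>n. prob {\<omega>\<in>space M. \<delta> \<le> \<bar>(\<Sum>i\<in>{1..n}. Y i \<omega>) / real n - c\<bar>}) \<longlonglongrightarrow> 0"
proof -
  define q where "q = exp (- \<delta>\<^sup>2 / (2 * K\<^sup>2))"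
  have Hoeffding: "prob {\<omega>\<in>space M. \<delta> \<le> \<bar>(\<Sum>i\<in>{1..n}. Y i \<omega>) / real n - c\<bar>} \<le> 2 * q ^ n"
    if "n \<ge> 1" for n
  proof -
    interpret Hoeffding_ineq M "{1..n}" Y "\<lambda>_. - K" "\<lambda>_. K" "\<Sum>i\<in>{1..n}. expectation (Y i)"
    proof unfold_locales
      show "indep_vars (\<lambda>_. borel) Y {1..n}"
        by (rule indep_vars_subset[OF indep]) auto
      show "AE \<omega> in M. Y i \<omega> \<in> {- K..K}" if "i \<in> {1..n}" for i
      proof (rule AE_I2)
        fix \<omega> assume "\<omega> \<in> space M"
        then have "\<bar>Y i \<omega>\<bar> \<le> K"
          using bounded that by simp
        then show "Y i \<omega> \<in> {- K..K}"
          by (auto simp: abs_le_iff)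
      qed
    qed simp
    have "\<delta> \<le> \<bar>s / n - c\<bar> \<longleftrightarrow> \<delta> * n \<le> \<bar>s - (\<Sum>i\<in>{1..n}. expectation (Y i))\<bar>" for s
    proof -
      have "s / n - c = (s - n * c) / n"
        using that by (simp add: field_simps)
      then show ?thesis
        using that mean by (simp add: abs_divide pos_le_divide_eq)
    qed
    then have "{\<omega>\<in>space M. \<delta> \<le> \<bar>(\<Sum>i\<in>{1..n}. Y i \<omega>) / real n - c\<bar>}
        = {\<omega>\<in>space M. \<delta> * n \<le> \<bar>(\<Sum>i\<in>{1..n}. Y i \<omega>) - (\<Sum>i\<in>{1..n}. expectation (Y i))\<bar>}"
      by simp
    also have "prob \<dots> \<le> 2 * exp (- 2 * (\<delta> * n)\<^sup>2 / (\<Sum>i\<in>{1..n}. (K - - K)\<^sup>2))"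
      using \<open>\<delta> > 0\<close> \<open>K > 0\<close> that by (intro Hoeffding_ineq_abs_ge) auto
    also have "- 2 * (\<delta> * n)\<^sup>2 / (\<Sum>i\<in>{1..n}. (K - - K)\<^sup>2) = n * (- \<delta>\<^sup>2 / (2 * K\<^sup>2))"
      using that \<open>K > 0\<close> by (simp add: field_simps power2_eq_square)
    finally show ?thesis
      by (simp only: q_def exp_of_nat_mult)
  qed
  have lim: "(\<lambda>n. 2 * q ^ n) \<longlonglongrightarrow> 0"
    using \<open>\<delta> > 0\<close> \<open>K > 0\<close> by (intro tendsto_mult_right_zero LIMSEQ_power_zero) (simp add: q_def)
  have "\<forall>\<^sub>F n in sequentially.
      prob {\<omega>\<in>space M. \<delta> \<le> \<bar>(\<Sum>i\<in>{1..n}. Y i \<omega>) / real n - c\<bar>} \<le> 2 * q ^ n"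
    using Hoeffding by (rule eventually_sequentiallyI)
  from tendsto_sandwich[OF always_eventually this tendsto_const lim] show ?thesis
    by simp
qed

lemma (in prob_space) prob_l1norm_prod_exp_diff_gt_le:
  assumes \<xi>: "\<And>i. i \<in> {1..n} \<Longrightarrow> \<xi> i \<in> measurable M (count_space UNIV)"
    and nonzero: "\<And>i. i \<in> {1..n} \<Longrightarrow> AE \<omega> in M. \<xi> i \<omega> \<noteq> 0" and "T > 0"
  shows "prob {\<omega> \<in> space M. \<exists>t\<in>{0..T}.
            l1norm (\<lambda>j. prod_exp (\<lambda>i. \<xi> i \<omega>) n (t / real n) x j - op_exp opEA t x j) > \<epsilon>}
       \<le> prob {\<omega>\<in>space M.
            \<epsilon> / T \<le> \<bar>(\<Sum>i\<in>{1..n}. x (\<xi> i \<omega>)) / real n - (\<Sum>k. (1/2) ^ Suc k * x (Suc k))\<bar>}"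
proof (rule finite_measure_mono_AE)
  have "AE \<omega> in M. \<forall>i\<in>{1..n}. \<xi> i \<omega> \<noteq> 0"
    using nonzero by (intro AE_finite_allI) auto
  then show "AE \<omega> in M. \<omega> \<in> {\<omega> \<in> space M. \<exists>t\<in>{0..T}.
        l1norm (\<lambda>j. prod_exp (\<lambda>i. \<xi> i \<omega>) n (t / real n) x j - op_exp opEA t x j) > \<epsilon>}
      \<longrightarrow> \<omega> \<in> {\<omega>\<in>space M.
        \<epsilon> / T \<le> \<bar>(\<Sum>i\<in>{1..n}. x (\<xi> i \<omega>)) / real n - (\<Sum>k. (1/2) ^ Suc k * x (Suc k))\<bar>}"
  proof eventually_elim
    case (elim \<omega>)
    have "\<epsilon> / T \<le> \<bar>(\<Sum>i\<in>{1..n}. x (\<xi> i \<omega>)) / real n - (\<Sum>k. (1/2) ^ Suc k * x (Suc k))\<bar>"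
      if "\<exists>t\<in>{0..T}. \<epsilon> < l1norm (\<lambda>j. prod_exp (\<lambda>i. \<xi> i \<omega>) n (t / real n) x j - op_exp opEA t x j)"
      by (rule deviation_ge_of_l1norm_prod_exp_diff_gt[OF _ \<open>T > 0\<close> that]) (use elim in blast)
    then show ?case
      by blast
  qed
  have [measurable]: "(\<lambda>\<omega>. \<Sum>i\<in>{1..n}. x (\<xi> i \<omega>)) \<in> borel_measurable M"
    using \<xi> by (intro borel_measurable_sum measurable_compose[OF _ borel_measurable_count_space])
  then show "{\<omega>\<in>space M.
      \<epsilon> / T \<le> \<bar>(\<Sum>i\<in>{1..n}. x (\<xi> i \<omega>)) / real n - (\<Sum>k. (1/2) ^ Suc k * x (Suc k))\<bar>}
      \<in> events"
    by measurable
qed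

theorem mainTheorem8:
  fixes M :: "'a measure" and \<xi> :: "nat \<Rightarrow> 'a \<Rightarrow> nat"
    and x :: "nat \<Rightarrow> real" and T \<epsilon> :: real
  assumes "prob_space M"
    and "\<And>i. i \<ge> 1 \<Longrightarrow> \<xi> i \<in> measurable M (count_space UNIV)"
    and "prob_space.indep_vars M (\<lambda>_. count_space UNIV) \<xi> {1..}"
    and "\<And>i k. i \<ge> 1 \<Longrightarrow> k \<ge> 1 \<Longrightarrow> measure M {\<omega> \<in> space M. \<xi> i \<omega> = k} = (1/2) ^ k"
    and "x \<in> l1" and "T > 0" and "\<epsilon> > 0"
  shows "(\<lambda>n. measure M {\<omega> \<in> space M. \<exists>t\<in>{0..T}.
            l1norm (\<lambda>j. prod_exp (\<lambda>i. \<xi> i \<omega>) n (t / real n) x j - op_exp opEA t x j) > \<epsilon>})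
         \<longlonglongrightarrow> 0"
proof -
  interpret prob_space M by fact
  note \<xi> = assms(2) and distr_\<xi> = assms(4)
  define c where "c = (\<Sum>k. (1/2) ^ Suc k * x (Suc k))"
  have bounded: "\<bar>x k\<bar> \<le> l1norm x + 1" for k
    using abs_le_l1norm[OF \<open>x \<in> l1\<close>, of k] by linarith
  have lim: "(\<lambda>n. prob {\<omega>\<in>space M. \<epsilon> / T \<le> \<bar>(\<Sum>i\<in>{1..n}. x (\<xi> i \<omega>)) / real n - c\<bar>})
      \<longlonglongrightarrow> 0"
  proof (rule tendsto_prob_sample_mean_deviation[where K = "l1norm x + 1"])
    show "indep_vars (\<lambda>_. borel) (\<lambda>i \<omega>. x (\<xi> i \<omega>)) {1..}"
      using indep_vars_compose2[OF assms(3), of "\<lambda>_. x" "\<lambda>_. borel"] by simp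
    show "expectation (\<lambda>\<omega>. x (\<xi> i \<omega>)) = c" if "i \<ge> 1" for i
      unfolding c_def using \<xi> distr_\<xi> bounded that by (intro expectation_comp_geometric) auto
  qed (use abs_le_l1norm[OF \<open>x \<in> l1\<close>, of 0] bounded \<open>T > 0\<close> \<open>\<epsilon> > 0\<close> in auto)
  have le: "prob {\<omega> \<in> space M. \<exists>t\<in>{0..T}.
            l1norm (\<lambda>j. prod_exp (\<lambda>i. \<xi> i \<omega>) n (t / real n) x j - op_exp opEA t x j) > \<epsilon>}
      \<le> prob {\<omega>\<in>space M. \<epsilon> / T \<le> \<bar>(\<Sum>i\<in>{1..n}. x (\<xi> i \<omega>)) / real n - c\<bar>}" for n
    unfolding c_def
    by (intro prob_l1norm_prod_exp_diff_gt_le AE_neq_0_of_geometric \<xi> distr_\<xi> \<open>T > 0\<close>) auto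
  show ?thesis
    using le by (intro tendsto_sandwich[OF always_eventually always_eventually tendsto_const lim]) auto
qed

end
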